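(* Let $d$ be a positive integer and let $A\in\mathbb{R}^{[3]\times[n]}$ be a matrix that cannot be eliminated at any column. Then there exists $b\in\mathbb{R}^{[3]}$ such that the solution graph $G(R(A,b))$ is not connected.
   Context: Fix a positive integer $d$ and let $D=\{0,1,\dots,d\}$; $[n]=\{1,\dots,n\}$. For $A\in\mathbb{R}^{[m]\times[n]}$ and $b\in\mathbb{R}^{[m]}$, $R(A,b)=\{x\in D^{[n]} : Ax\ge b\}$. For $R\subseteq D^{[n]}$, the solution graph $G(R)$ is the undirected graph with vertex set $R$ in which $x,y$ are adjacent iff they differ in exactly one coordinate. A matrix $A=(a_{ij})\in\mathbb{R}^{[m]\times[n]}$ can be eliminated at column $j\in[n]$ if (i) for every row $i$ with $a_{ij}>0$ we have $a_{ij'}=0$ for all $j'\in[n]\setminus\{j\}$, or (ii) for every row $i$ with $a_{ij}<0$ we have $a_{ij'}=0$ for all $j'\in[n]\setminus\{j\}$. *)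

theory Defs
  imports Complex_Main "HOL-Library.FuncSet"
begin

definition grid :: "nat \<Rightarrow> nat \<Rightarrow> (nat \<Rightarrow> nat) set" where
  "grid d n = {1..n} \<rightarrow>\<^sub>E {0..d}"

definition sol_set :: "nat \<Rightarrow> nat \<Rightarrow> nat \<Rightarrow> (nat \<Rightarrow> nat \<Rightarrow> real) \<Rightarrow> (nat \<Rightarrow> real) \<Rightarrow> (nat \<Rightarrow> nat) set" where
  "sol_set d m n A b =
     {x \<in> grid d n. \<forall>i\<in>{1..m}. (\<Sum>j=1..n. A i j * real (x j)) \<ge> b i}"

definition adj :: "nat \<Rightarrow> (nat \<Rightarrow> nat) \<Rightarrow> (nat \<Rightarrow> nat) \<Rightarrow> bool" where
  "adj n x y \<longleftrightarrow> card {j\<in>{1..n}. x j \<noteq> y j} = 1"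

text \<open>G(R) is connected: any two vertices are joined by a path inside R
  (with the convention that the empty graph is connected).\<close>

definition sol_graph_connected :: "nat \<Rightarrow> (nat \<Rightarrow> nat) set \<Rightarrow> bool" where
  "sol_graph_connected n R \<longleftrightarrow>
     (\<forall>x\<in>R. \<forall>y\<in>R. (x, y) \<in> ({(u, v). u \<in> R \<and> v \<in> R \<and> adj n u v})\<^sup>*)"

definition can_eliminate :: "nat \<Rightarrow> nat \<Rightarrow> (nat \<Rightarrow> nat \<Rightarrow> real) \<Rightarrow> nat \<Rightarrow> bool" where
  "can_eliminate m n A j \<longleftrightarrow>
     (\<forall>i\<in>{1..m}. A i j > 0 \<longrightarrow> (\<forall>j'\<in>{1..n} - {j}. A i j' = 0)) \<or>
     (\<forall>i\<in>{1..m}. A i j < 0 \<longrightarrow> (\<forall>j'\<in>{1..n} - {j}. A i j' = 0))"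

end

theory Submission
  imports Defs
begin

(* If x and y are distinct points of D^[n], every coordinate of x lies at a bound of D, and
   moving any coordinate of x one step into D pushes some row of A x below min (A x, A y),
   then x is an isolated vertex of G(R(A, min (A x, A y))).  Such pairs come from a set S of
   columns with signs delta: x is the corner of the box opposite to delta on S, and y = x + delta
   on S.  Off S a coordinate of x can be pinned by any row whose total shift w = A delta is
   nonnegative, which is possible for every column with entries of both signs once at most one
   row has w < 0; with three rows this holds for delta or for -delta.  Non-eliminability provides
   (S, delta): either two rows have opposite signs in two different columns, or every column has
   a zero entry and the signs form a cycle on three columns. *)

abbreviation row_value :: "(nat \<Rightarrow> nat \<Rightarrow> real) \<Rightarrow> nat \<Rightarrow> nat \<Rightarrow> (nat \<Rightarrow> nat) \<Rightarrow> real" where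
  "row_value A n i x \<equiv> \<Sum>j = 1..n. A i j * real (x j)"

lemma not_connected_of_isolated:
  assumes "x \<in> R" "y \<in> R" "x \<noteq> y" and "\<forall>u\<in>R. \<not> adj n x u"
  shows "\<not> sol_graph_connected n R"
proof
  assume "sol_graph_connected n R"
  then have "(x, y) \<in> {(u, v). u \<in> R \<and> v \<in> R \<and> adj n u v}\<^sup>*"
    using assms(1,2) unfolding sol_graph_connected_def by blast
  then show False
    using assms(3,4) by (auto elim: converse_rtranclE)
qed

lemma adj_obtain_coordinate:
  assumes "adj n x y"
  obtains j where "j \<in> {1..n}" "x j \<noteq> y j" "\<forall>l\<in>{1..n} - {j}. y l = x l"
proof -
  obtain j where "{j\<in>{1..n}. x j \<noteq> y j} = {j}"
    using assms unfolding adj_def by (rule card_1_singletonE)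
  then show ?thesis
    by (intro that) (blast, blast, force)
qed

lemma row_value_diff:
  "row_value A n i y - row_value A n i x = (\<Sum>l=1..n. A i l * (real (y l) - real (x l)))"
  by (simp add: sum_subtractf[symmetric] algebra_simps)

lemma row_value_change_one:
  assumes "j \<in> {1..n}" "\<forall>l\<in>{1..n} - {j}. y l = x l"
  shows "row_value A n i y = row_value A n i x + A i j * (real (y j) - real (x j))"
proof -
  have "row_value A n i y - row_value A n i x
      = A i j * (real (y j) - real (x j)) + (\<Sum>l\<in>{1..n} - {j}. A i l * (real (y l) - real (x l)))"
    unfolding row_value_diff using assms(1) by (simp add: sum.remove)
  also have "(\<Sum>l\<in>{1..n} - {j}. A i l * (real (y l) - real (x l))) = 0"
    using assms(2) by (intro sum.neutral) auto
  finally show ?thesis by simp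
qed

lemma no_neighbour_in_sol_set:
  assumes "\<forall>j\<in>{1..n}.
      (x j = 0 \<and> (\<exists>i\<in>{1..m}. A i j < 0 \<and> row_value A n i x + A i j < b i)) \<or>
      (x j = d \<and> (\<exists>i\<in>{1..m}. 0 < A i j \<and> row_value A n i x - A i j < b i))"
  shows "\<forall>u\<in>sol_set d m n A b. \<not> adj n x u"
proof (intro ballI notI)
  fix u assume u: "u \<in> sol_set d m n A b" and "adj n x u"
  from \<open>adj n x u\<close> obtain j where j: "j \<in> {1..n}" "x j \<noteq> u j" and same: "\<forall>l\<in>{1..n} - {j}. u l = x l"
    by (rule adj_obtain_coordinate)
  have "u j \<le> d" and sol: "\<forall>i\<in>{1..m}. b i \<le> row_value A n i u"
    using u j(1) unfolding sol_set_def grid_def by auto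
  have step: "row_value A n i u = row_value A n i x + A i j * (real (u j) - real (x j))" for i
    using j(1) same by (rule row_value_change_one)
  from assms j(1) show False
  proof (elim ballE disjE conjE bexE)
    fix i assume "x j = 0" "i \<in> {1..m}" "A i j < 0" "row_value A n i x + A i j < b i"
    moreover have "A i j * (real (u j) - real (x j) - 1) \<le> 0"
      using \<open>A i j < 0\<close> \<open>x j = 0\<close> j(2) by (intro mult_nonpos_nonneg) auto
    then have "A i j * (real (u j) - real (x j)) \<le> A i j"
      by (simp add: algebra_simps)
    ultimately show False
      using sol step[of i] by fastforce
  next
    fix i assume "x j = d" "i \<in> {1..m}" "0 < A i j" "row_value A n i x - A i j < b i"
    moreover have "A i j * (real (u j) - real (x j) + 1) \<le> 0"
      using \<open>0 < A i j\<close> \<open>x j = d\<close> \<open>u j \<le> d\<close> j(2) by (intro mult_nonneg_nonpos) auto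
    then have "A i j * (real (u j) - real (x j)) \<le> - A i j"
      by (simp add: algebra_simps)
    ultimately show False
      using sol step[of i] by fastforce
  qed blast
qed

lemma disconnected_of_isolating_pair:
  assumes "x \<in> grid d n" "y \<in> grid d n" "x \<noteq> y"
    and pinned: "\<forall>j\<in>{1..n}.
      (x j = 0 \<and> (\<exists>i\<in>{1..m}. A i j < 0 \<and> A i j < row_value A n i y - row_value A n i x)) \<or>
      (x j = d \<and> (\<exists>i\<in>{1..m}. 0 < A i j \<and> - A i j < row_value A n i y - row_value A n i x))"
  shows "\<not> sol_graph_connected n (sol_set d m n A (\<lambda>i. min (row_value A n i x) (row_value A n i y)))"
    (is "\<not> sol_graph_connected n ?R")
proof -
  have "x \<in> ?R" "y \<in> ?R"
    using assms(1,2) unfolding sol_set_def by auto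
  moreover have below_plus:
    "row_value A n i x + a < min (row_value A n i x) (row_value A n i y) \<longleftrightarrow>
       a < 0 \<and> a < row_value A n i y - row_value A n i x" for i a
    by auto
  moreover have below_minus:
    "row_value A n i x - a < min (row_value A n i x) (row_value A n i y) \<longleftrightarrow>
       0 < a \<and> - a < row_value A n i y - row_value A n i x" for i a
    by auto
  have "\<forall>u\<in>?R. \<not> adj n x u"
    by (rule no_neighbour_in_sol_set, unfold below_plus below_minus) (use pinned in blast)
  ultimately show ?thesis
    using not_connected_of_isolated \<open>x \<noteq> y\<close> by blast
qed

lemma row_value_shift:
  assumes "S \<subseteq> {1..n}"
    and "\<forall>l\<in>{1..n}. real (y l) - real (x l) = (if l \<in> S then \<delta> l else 0)"
  shows "row_value A n i y - row_value A n i x = (\<Sum>l\<in>S. \<delta> l * A i l)"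
proof -
  have "row_value A n i y - row_value A n i x = (\<Sum>l\<in>{1..n}. if l \<in> S then \<delta> l * A i l else 0)"
    unfolding row_value_diff using assms(2) by (intro sum.cong) auto
  also have "\<dots> = (\<Sum>l\<in>S. \<delta> l * A i l)"
    unfolding sum.inter_restrict[OF finite_atLeastAtMost, symmetric]
    using assms(1) by (simp add: Int_absorb1)
  finally show ?thesis .
qed

(* With x at the corner of D^S opposite to delta and y = x + delta on S, moving coordinate l of x
   one step into D drops row i of A x below both (A x) i and (A y) i. *)
definition blocking_shift :: "nat \<Rightarrow> (nat \<Rightarrow> nat \<Rightarrow> real) \<Rightarrow> nat set \<Rightarrow> (nat \<Rightarrow> real) \<Rightarrow> bool" where
  "blocking_shift m A S \<delta> \<longleftrightarrow>
     (\<forall>l\<in>S. \<exists>i\<in>{1..m}. \<delta> l * A i l < 0 \<and> \<delta> l * A i l < (\<Sum>l'\<in>S. \<delta> l' * A i l'))"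

lemma blocking_shift_uminus_iff:
  "blocking_shift m A S (\<lambda>l. - \<delta> l) \<longleftrightarrow>
     (\<forall>l\<in>S. \<exists>i\<in>{1..m}. 0 < \<delta> l * A i l \<and> (\<Sum>l'\<in>S. \<delta> l' * A i l') < \<delta> l * A i l)"
  by (simp add: blocking_shift_def sum_negf)

lemma blocking_shift_pinned:
  assumes "blocking_shift m A S \<delta>" "l \<in> S" "\<bar>\<delta> l\<bar> = 1"
  shows "(\<delta> l = 1 \<and> (\<exists>i\<in>{1..m}. A i l < 0 \<and> A i l < (\<Sum>l'\<in>S. \<delta> l' * A i l'))) \<or>
    (\<delta> l = -1 \<and> (\<exists>i\<in>{1..m}. 0 < A i l \<and> - A i l < (\<Sum>l'\<in>S. \<delta> l' * A i l')))"
proof -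
  obtain i where "i \<in> {1..m}" "\<delta> l * A i l < 0" "\<delta> l * A i l < (\<Sum>l'\<in>S. \<delta> l' * A i l')"
    using assms(1,2) unfolding blocking_shift_def by blast
  moreover have "\<delta> l = 1 \<or> \<delta> l = -1"
    using assms(3) by (simp add: abs_eq_iff')
  ultimately show ?thesis by auto
qed

definition mixed_column :: "nat \<Rightarrow> (nat \<Rightarrow> nat \<Rightarrow> real) \<Rightarrow> nat \<Rightarrow> bool" where
  "mixed_column m A j \<longleftrightarrow> (\<exists>i\<in>{1..m}. 0 < A i j) \<and> (\<exists>i\<in>{1..m}. A i j < 0)"

lemma exists_pinning_row:
  fixes w :: "nat \<Rightarrow> real"
  assumes "mixed_column m A j"
    and one_negative: "\<forall>i\<in>{1..m}. \<forall>i'\<in>{1..m}. w i < 0 \<and> w i' < 0 \<longrightarrow> i = i'"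
  shows "(\<exists>i\<in>{1..m}. 0 \<le> w i \<and> A i j < 0) \<or> (\<exists>i\<in>{1..m}. 0 < A i j \<and> 0 \<le> w i)"
proof -
  obtain p q where p: "p \<in> {1..m}" "0 < A p j" and q: "q \<in> {1..m}" "A q j < 0"
    using assms(1) unfolding mixed_column_def by blast
  show ?thesis
  proof (cases "0 \<le> w q")
    case True
    with q show ?thesis by blast
  next
    case False
    have "0 \<le> w p"
    proof (rule ccontr)
      assume "\<not> 0 \<le> w p"
      with False one_negative p(1) q(1) have "p = q"
        unfolding not_le by blast
      with p(2) q(2) show False by simp
    qed
    with p show ?thesis by blast
  qed
qed

lemma obtain_corner_pair:
  assumes "d \<ge> 1" and S: "S \<subseteq> {1..n}" "S \<noteq> {}" and signs: "\<forall>l\<in>S. \<bar>\<delta> l\<bar> = 1"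
    and "\<forall>l\<in>{1..n} - S. z l \<le> d"
  obtains x y where "x \<in> grid d n" "y \<in> grid d n" "x \<noteq> y"
    "\<forall>l\<in>S. x l = (if \<delta> l = 1 then 0 else d)" "\<forall>l\<in>{1..n} - S. x l = z l"
    "\<forall>i. row_value A n i y - row_value A n i x = (\<Sum>l\<in>S. \<delta> l * A i l)"
proof -
  define x where "x l =
    (if l \<notin> {1..n} then undefined else if l \<in> S then (if \<delta> l = 1 then 0 else d) else z l)" for l
  define y where "y l = (if l \<in> S then (if \<delta> l = 1 then 1 else d - 1) else x l)" for l
  have sign_cases: "\<delta> l = 1 \<or> \<delta> l = -1" if "l \<in> S" for l
    using signs that by (simp add: abs_eq_iff')
  have x_on_S: "\<forall>l\<in>S. x l = (if \<delta> l = 1 then 0 else d)"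
    using S(1) unfolding x_def by auto
  have "x \<in> grid d n" "y \<in> grid d n"
    using S(1) \<open>d \<ge> 1\<close> assms(5)
    unfolding grid_def PiE_def extensional_def by (auto simp: x_def y_def)
  moreover have shift: "real (y l) - real (x l) = (if l \<in> S then \<delta> l else 0)" for l
    using sign_cases[of l] \<open>d \<ge> 1\<close> x_on_S by (cases "l \<in> S") (auto simp: y_def of_nat_diff)
  moreover have "x \<noteq> y"
  proof -
    obtain l where "l \<in> S" using S(2) by blast
    then have "real (y l) - real (x l) \<noteq> 0"
      using shift[of l] sign_cases[of l] by auto
    then show ?thesis by auto
  qed
  moreover have "\<forall>l\<in>{1..n} - S. x l = z l"
    unfolding x_def by simp
  moreover have "\<forall>i. row_value A n i y - row_value A n i x = (\<Sum>l\<in>S. \<delta> l * A i l)"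
    using S(1) shift by (intro allI row_value_shift) auto
  ultimately show ?thesis
    using that x_on_S by blast
qed

lemma disconnected_of_blocking_shift:
  assumes "d \<ge> 1" and S: "S \<subseteq> {1..n}" "S \<noteq> {}" and signs: "\<forall>l\<in>S. \<bar>\<delta> l\<bar> = 1"
    and blocking: "blocking_shift m A S \<delta>"
    and one_negative: "\<forall>i\<in>{1..m}. \<forall>i'\<in>{1..m}.
      (\<Sum>l\<in>S. \<delta> l * A i l) < 0 \<and> (\<Sum>l\<in>S. \<delta> l * A i' l) < 0 \<longrightarrow> i = i'"
    and mixed: "\<forall>j\<in>{1..n}. mixed_column m A j"
  shows "\<exists>b. \<not> sol_graph_connected n (sol_set d m n A b)"
proof -
  define w where "w i = (\<Sum>l\<in>S. \<delta> l * A i l)" for i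
  define low where "low l \<longleftrightarrow> (\<exists>i\<in>{1..m}. 0 \<le> w i \<and> A i l < 0)" for l
  obtain x y where grid: "x \<in> grid d n" "y \<in> grid d n" "x \<noteq> y"
    and x_on_S: "\<forall>l\<in>S. x l = (if \<delta> l = 1 then 0 else d)"
    and x_off_S: "\<forall>l\<in>{1..n} - S. x l = (if low l then 0 else d)"
    and w: "\<forall>i. row_value A n i y - row_value A n i x = w i"
    unfolding w_def
    by (rule obtain_corner_pair[where z = "\<lambda>l. if low l then 0 else d" and A = A, OF assms(1-4)]) auto
  have "(x j = 0 \<and> (\<exists>i\<in>{1..m}. A i j < 0 \<and> A i j < w i)) \<or>
      (x j = d \<and> (\<exists>i\<in>{1..m}. 0 < A i j \<and> - A i j < w i))" if j: "j \<in> {1..n}" for j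
  proof (cases "j \<in> S")
    case True
    with blocking_shift_pinned[OF blocking True] signs
    consider "\<delta> j = 1" "\<exists>i\<in>{1..m}. A i j < 0 \<and> A i j < w i"
      | "\<delta> j = -1" "\<exists>i\<in>{1..m}. 0 < A i j \<and> - A i j < w i"
      unfolding w_def by blast
    then show ?thesis
      using x_on_S True by cases simp_all
  next
    case False
    with j x_off_S have x_j: "x j = (if low j then 0 else d)" by blast
    have "low j \<or> (\<exists>i\<in>{1..m}. 0 < A i j \<and> 0 \<le> w i)"
      using exists_pinning_row[of m A j w] mixed j one_negative unfolding w_def low_def by blast
    then show ?thesis
    proof (cases "low j")
      case True
      then show ?thesis
        using x_j unfolding low_def by force
    next
      case False
      with \<open>low j \<or> _\<close> obtain i where "i \<in> {1..m}" "0 < A i j" "0 \<le> w i" by blast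
      with False x_j show ?thesis by force
    qed
  qed
  then have "\<not> sol_graph_connected n (sol_set d m n A (\<lambda>i. min (row_value A n i x) (row_value A n i y)))"
    using grid unfolding w[rule_format, symmetric] by (intro disconnected_of_isolating_pair) auto
  then show ?thesis by blast
qed

lemma disconnected_of_blocking_shifts:
  assumes "m \<le> 3" "d \<ge> 1" "S \<subseteq> {1..n}" "S \<noteq> {}" "\<forall>l\<in>S. \<bar>\<delta> l\<bar> = 1"
    and "blocking_shift m A S \<delta>" "blocking_shift m A S (\<lambda>l. - \<delta> l)"
    and "\<forall>j\<in>{1..n}. mixed_column m A j"
  shows "\<exists>b. \<not> sol_graph_connected n (sol_set d m n A b)"
proof (cases "\<forall>i\<in>{1..m}. \<forall>i'\<in>{1..m}.
    (\<Sum>l\<in>S. \<delta> l * A i l) < 0 \<and> (\<Sum>l\<in>S. \<delta> l * A i' l) < 0 \<longrightarrow> i = i'")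
  case True
  show ?thesis
    by (rule disconnected_of_blocking_shift[OF assms(2-6) True assms(8)])
next
  case False
  then obtain i i' where i: "i \<in> {1..m}" "i' \<in> {1..m}" "i \<noteq> i'"
    and negative: "(\<Sum>l\<in>S. \<delta> l * A i l) < 0" "(\<Sum>l\<in>S. \<delta> l * A i' l) < 0"
    by blast
  have "\<forall>k\<in>{1..m}. \<forall>k'\<in>{1..m}.
      (\<Sum>l\<in>S. - \<delta> l * A k l) < 0 \<and> (\<Sum>l\<in>S. - \<delta> l * A k' l) < 0 \<longrightarrow> k = k'"
  proof (intro ballI impI)
    fix k k' assume k: "k \<in> {1..m}" "k' \<in> {1..m}"
      and "(\<Sum>l\<in>S. - \<delta> l * A k l) < 0 \<and> (\<Sum>l\<in>S. - \<delta> l * A k' l) < 0"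
    then have "0 < (\<Sum>l\<in>S. \<delta> l * A k l)" "0 < (\<Sum>l\<in>S. \<delta> l * A k' l)"
      by (simp_all add: sum_negf)
    with negative have "k \<notin> {i, i'}" "k' \<notin> {i, i'}"
      by auto
    with i k \<open>m \<le> 3\<close> show "k = k'"
      by auto
  qed
  moreover have "\<forall>l\<in>S. \<bar>- \<delta> l\<bar> = 1"
    using assms(5) by simp
  ultimately show ?thesis
    using disconnected_of_blocking_shift[OF assms(2-4) _ assms(7) _ assms(8)] by blast
qed

lemma obtain_separating_sign:
  fixes a b :: real
  assumes "a * b < 0"
  obtains s where "\<bar>s\<bar> = 1" "0 < s * a" "s * b < 0"
proof (cases "0 < a")
  case True
  with assms have "b < 0" by (simp add: mult_less_0_iff)
  with True show ?thesis by (intro that[of 1]) auto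
next
  case False
  with assms have "a < 0" "0 < b" by (auto simp: mult_less_0_iff)
  then show ?thesis by (intro that[of "-1"]) auto
qed

lemma blocking_shift_pair:
  assumes "p \<in> {1..m}" "q \<in> {1..m}" "k \<noteq> l" "A p k * A q k < 0" "A p l * A q l < 0"
  obtains \<delta> where "\<forall>c\<in>{k, l}. \<bar>\<delta> c\<bar> = 1"
    "blocking_shift m A {k, l} \<delta>" "blocking_shift m A {k, l} (\<lambda>c. - \<delta> c)"
proof -
  obtain s where s: "\<bar>s\<bar> = 1" "0 < s * A p k" "s * A q k < 0"
    using assms(4) by (rule obtain_separating_sign)
  obtain t where t: "\<bar>t\<bar> = 1" "0 < t * A q l" "t * A p l < 0"
    using assms(5) by (subst (asm) mult.commute) (rule obtain_separating_sign)
  define \<delta> where "\<delta> c = (if c = k then s else t)" for c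
  have sum: "(\<Sum>c\<in>{k, l}. \<delta> c * A i c) = s * A i k + t * A i l" for i
    using assms(3) by (simp add: \<delta>_def)
  have "blocking_shift m A {k, l} \<delta>"
    unfolding blocking_shift_def sum using assms(1,2,3) s t by (auto simp: \<delta>_def)
  moreover have "blocking_shift m A {k, l} (\<lambda>c. - \<delta> c)"
    unfolding blocking_shift_uminus_iff sum using assms(1,2,3) s t by (auto simp: \<delta>_def)
  moreover have "\<forall>c\<in>{k, l}. \<bar>\<delta> c\<bar> = 1"
    using s t by (simp add: \<delta>_def)
  ultimately show ?thesis by (rule that[rotated])
qed

lemma blocking_shift_cycle:
  assumes "p \<in> {1..m}" "q \<in> {1..m}" "r \<in> {1..m}"
    and "0 < A p j" "A q j < 0" "A r j = 0"
    and "A r k * A p k < 0" "A q k = 0"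
    and "A q l * A r l < 0" "A p l = 0"
  obtains \<delta> where "\<forall>c\<in>{j, k, l}. \<bar>\<delta> c\<bar> = 1"
    "blocking_shift m A {j, k, l} \<delta>" "blocking_shift m A {j, k, l} (\<lambda>c. - \<delta> c)"
proof -
  obtain s where s: "\<bar>s\<bar> = 1" "0 < s * A r k" "s * A p k < 0"
    using assms(7) by (rule obtain_separating_sign)
  obtain t where t: "\<bar>t\<bar> = 1" "0 < t * A q l" "t * A r l < 0"
    using assms(9) by (rule obtain_separating_sign)
  have "j \<noteq> k" "j \<noteq> l" "k \<noteq> l"
    using assms(6-10) by auto
  define \<delta> where "\<delta> c = (if c = k then s else if c = l then t else 1)" for c
  have sum: "(\<Sum>c\<in>{j, k, l}. \<delta> c * A i c) = A i j + s * A i k + t * A i l" for i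
    using \<open>j \<noteq> k\<close> \<open>j \<noteq> l\<close> \<open>k \<noteq> l\<close> by (simp add: \<delta>_def)
  have "blocking_shift m A {j, k, l} \<delta>"
    unfolding blocking_shift_def sum
    using assms s t \<open>j \<noteq> k\<close> \<open>j \<noteq> l\<close> \<open>k \<noteq> l\<close> by (auto simp: \<delta>_def)
  moreover have "blocking_shift m A {j, k, l} (\<lambda>c. - \<delta> c)"
    unfolding blocking_shift_uminus_iff sum
    using assms s t \<open>j \<noteq> k\<close> \<open>j \<noteq> l\<close> \<open>k \<noteq> l\<close> by (auto simp: \<delta>_def)
  moreover have "\<forall>c\<in>{j, k, l}. \<bar>\<delta> c\<bar> = 1"
    using s t by (simp add: \<delta>_def)
  ultimately show ?thesis by (rule that[rotated])
qed

lemma not_can_eliminate_iff: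
  "\<not> can_eliminate m n A j \<longleftrightarrow>
     (\<exists>p\<in>{1..m}. 0 < A p j \<and> (\<exists>j'\<in>{1..n} - {j}. A p j' \<noteq> 0)) \<and>
     (\<exists>q\<in>{1..m}. A q j < 0 \<and> (\<exists>j'\<in>{1..n} - {j}. A q j' \<noteq> 0))"
  unfolding can_eliminate_def by blast

lemma mixed_column_of_not_can_eliminate:
  assumes "\<not> can_eliminate m n A j"
  shows "mixed_column m A j"
  using assms unfolding not_can_eliminate_iff mixed_column_def by blast

lemma mixed_column_opposite_sign:
  assumes "mixed_column m A j" "A i j \<noteq> 0"
  shows "\<exists>s\<in>{1..m}. A s j * A i j < 0"
proof (cases "0 < A i j")
  case True
  obtain s where "s \<in> {1..m}" "A s j < 0" using assms(1) unfolding mixed_column_def by blast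
  moreover from \<open>A s j < 0\<close> True have "A s j * A i j < 0" by (rule mult_neg_pos)
  ultimately show ?thesis by blast
next
  case False
  with assms(2) have "A i j < 0" by simp
  obtain s where "s \<in> {1..m}" "0 < A s j" using assms(1) unfolding mixed_column_def by blast
  moreover from \<open>0 < A s j\<close> \<open>A i j < 0\<close> have "A s j * A i j < 0" by (rule mult_pos_neg)
  ultimately show ?thesis by blast
qed

definition opposed_in_two_columns :: "nat \<Rightarrow> nat \<Rightarrow> (nat \<Rightarrow> nat \<Rightarrow> real) \<Rightarrow> bool" where
  "opposed_in_two_columns m n A \<longleftrightarrow>
     (\<exists>p\<in>{1..m}. \<exists>q\<in>{1..m}. \<exists>k\<in>{1..n}. \<exists>l\<in>{1..n}.
        k \<noteq> l \<and> A p k * A q k < 0 \<and> A p l * A q l < 0)"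

lemma opposed_in_two_columns_of_lonely_row:
  assumes "t \<in> {1..m}" "j \<in> {1..n}" "k \<in> {1..n}" "j \<noteq> k"
    and "mixed_column m A k" "A t k \<noteq> 0"
    and lonely: "\<forall>s\<in>{1..m}. s \<noteq> t \<longrightarrow> A s j * A t j < 0"
  shows "opposed_in_two_columns m n A"
proof -
  obtain s where "s \<in> {1..m}" "A s k * A t k < 0"
    using mixed_column_opposite_sign[of m A k t] assms(5,6) by blast
  moreover have "s \<noteq> t"
    using \<open>A s k * A t k < 0\<close> not_square_less_zero by metis
  ultimately show ?thesis
    using lonely assms(1-4) unfolding opposed_in_two_columns_def by blast
qed

lemma column_has_zero:
  assumes no_elim: "\<forall>j\<in>{1..n}. \<not> can_eliminate 3 n A j"
    and "\<not> opposed_in_two_columns 3 n A" and "j \<in> {1..n}"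
  shows "\<exists>i\<in>{1..3}. A i j = 0"
proof (rule ccontr)
  assume nonzero: "\<not> (\<exists>i\<in>{1..3}. A i j = 0)"
  obtain p k q l where p: "p \<in> {1..3}" "0 < A p j" "k \<in> {1..n} - {j}" "A p k \<noteq> 0"
    and q: "q \<in> {1..3}" "A q j < 0" "l \<in> {1..n} - {j}" "A q l \<noteq> 0"
    using no_elim assms(3) unfolding not_can_eliminate_iff by blast
  have "\<exists>r\<in>{1..3::nat}. r \<noteq> p \<and> r \<noteq> q"
    by (rule bexI[of _ "if p \<noteq> 1 \<and> q \<noteq> 1 then 1 else if p \<noteq> 2 \<and> q \<noteq> 2 then 2 else 3"]) auto
  then obtain r where "r \<in> {1..3}" "r \<noteq> p" "r \<noteq> q" by blast
  moreover have "p \<noteq> q"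
    using p(2) q(2) by auto
  ultimately have rows: "s \<in> {p, q, r}" if "s \<in> {1..3}" for s
    using that p(1) q(1) by auto
  have mixed: "mixed_column 3 A c" if "c \<in> {1..n}" for c
    using no_elim that mixed_column_of_not_can_eliminate by blast
  show False
  proof (cases "A r j < 0")
    case True
    have "\<forall>s\<in>{1..3}. s \<noteq> p \<longrightarrow> A s j * A p j < 0"
      using rows True q(2) p(2) mult_neg_pos by blast
    with p assms(3) mixed have "opposed_in_two_columns 3 n A"
      by (intro opposed_in_two_columns_of_lonely_row[of p 3 j n k]) auto
    with assms(2) show False ..
  next
    case False
    with nonzero \<open>r \<in> {1..3}\<close> have "0 < A r j" by force
    have "\<forall>s\<in>{1..3}. s \<noteq> q \<longrightarrow> A s j * A q j < 0"
      using rows \<open>0 < A r j\<close> p(2) q(2) mult_pos_neg by blast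
    with q assms(3) mixed have "opposed_in_two_columns 3 n A"
      by (intro opposed_in_two_columns_of_lonely_row[of q 3 j n l]) auto
    with assms(2) show False ..
  qed
qed

lemma opposite_row_forced:
  assumes "\<not> opposed_in_two_columns 3 n A" and rows: "{p, q, r} = {1..3}"
    and "j \<in> {1..n}" "k \<in> {1..n}" "j \<noteq> k" "A p j * A q j < 0" "A p k \<noteq> 0"
    and mixed: "mixed_column 3 A k"
    and zero: "\<exists>i\<in>{1..3}. A i k = 0"
  shows "A q k = 0 \<and> A r k * A p k < 0"
proof -
  obtain s where "s \<in> {1..3}" and s: "A s k * A p k < 0"
    using mixed_column_opposite_sign[of 3 A k p, OF mixed \<open>A p k \<noteq> 0\<close>] by blast
  have "s \<noteq> p"
    using s not_square_less_zero by metis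
  moreover have "s \<noteq> q"
  proof
    assume "s = q"
    with s have "A p k * A q k < 0" by (simp add: mult.commute)
    with assms(1,3-6) rows show False
      unfolding opposed_in_two_columns_def by blast
  qed
  ultimately have "s = r"
    using rows \<open>s \<in> {1..3}\<close> by blast
  with s have "A r k * A p k < 0" by simp
  moreover obtain i where "i \<in> {1..3}" "A i k = 0"
    using zero by blast
  ultimately have "i = q"
    using rows \<open>A p k \<noteq> 0\<close> by auto
  with \<open>A i k = 0\<close> \<open>A r k * A p k < 0\<close> show ?thesis by simp
qed

lemma obtain_cyclic_sign_pattern:
  assumes no_elim: "\<forall>j\<in>{1..n}. \<not> can_eliminate 3 n A j"
    and not_opposed: "\<not> opposed_in_two_columns 3 n A" and "j \<in> {1..n}"
  obtains p q r k l where "p \<in> {1..3}" "q \<in> {1..3}" "r \<in> {1..3}" "k \<in> {1..n}" "l \<in> {1..n}"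
    "0 < A p j" "A q j < 0" "A r j = 0"
    "A r k * A p k < 0" "A q k = 0" "A q l * A r l < 0" "A p l = 0"
proof -
  have mixed: "mixed_column 3 A c" if "c \<in> {1..n}" for c
    using no_elim that mixed_column_of_not_can_eliminate by blast
  obtain p k q l where p: "p \<in> {1..3}" "0 < A p j" "k \<in> {1..n}" "k \<noteq> j" "A p k \<noteq> 0"
    and q: "q \<in> {1..3}" "A q j < 0" "l \<in> {1..n}" "l \<noteq> j" "A q l \<noteq> 0"
    using no_elim \<open>j \<in> {1..n}\<close> unfolding not_can_eliminate_iff by blast
  obtain r where r: "r \<in> {1..3}" "A r j = 0"
    using column_has_zero[OF no_elim not_opposed \<open>j \<in> {1..n}\<close>] by blast
  have "p \<noteq> q" "p \<noteq> r" "q \<noteq> r"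
    using p(2) q(2) r(2) by auto
  with p(1) q(1) r(1) have rows: "{p, q, r} = {1..3}"
    by auto
  have "A p j * A q j < 0"
    using p(2) q(2) by (rule mult_pos_neg)
  then have "A q k = 0 \<and> A r k * A p k < 0"
    using not_opposed rows \<open>j \<in> {1..n}\<close> p(3-5) mixed[OF p(3)]
      column_has_zero[OF no_elim not_opposed p(3)]
    by (intro opposite_row_forced[where n = n]) auto
  moreover have "A p l = 0 \<and> A r l * A q l < 0"
    using \<open>A p j * A q j < 0\<close> not_opposed rows \<open>j \<in> {1..n}\<close> q(3-5) mixed[OF q(3)]
      column_has_zero[OF no_elim not_opposed q(3)]
    by (intro opposite_row_forced[where n = n]) (auto simp: insert_commute mult.commute)
  ultimately show ?thesis
    using that p(1-3) q(1-3) r by (simp add: mult.commute)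
qed

lemma exists_blocking_shift:
  assumes "n \<ge> 1" and no_elim: "\<forall>j\<in>{1..n}. \<not> can_eliminate 3 n A j"
  obtains S \<delta> where "S \<subseteq> {1..n}" "S \<noteq> {}" "\<forall>l\<in>S. \<bar>\<delta> l\<bar> = 1"
    "blocking_shift 3 A S \<delta>" "blocking_shift 3 A S (\<lambda>l. - \<delta> l)"
proof (cases "opposed_in_two_columns 3 n A")
  case True
  then obtain p q k l where pq: "p \<in> {1..3}" "q \<in> {1..3}" and kl: "k \<in> {1..n}" "l \<in> {1..n}"
    and opposed: "k \<noteq> l" "A p k * A q k < 0" "A p l * A q l < 0"
    unfolding opposed_in_two_columns_def by blast
  from pq opposed obtain \<delta> where "\<forall>c\<in>{k, l}. \<bar>\<delta> c\<bar> = 1"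
    "blocking_shift 3 A {k, l} \<delta>" "blocking_shift 3 A {k, l} (\<lambda>c. - \<delta> c)"
    by (rule blocking_shift_pair)
  with kl show ?thesis
    using that[of "{k, l}" \<delta>] by blast
next
  case False
  have "1 \<in> {1..n}"
    using \<open>n \<ge> 1\<close> by simp
  with no_elim False obtain p q r k l where rows: "p \<in> {1..3}" "q \<in> {1..3}" "r \<in> {1..3}"
    and kl: "k \<in> {1..n}" "l \<in> {1..n}"
    and pattern: "0 < A p 1" "A q 1 < 0" "A r 1 = 0"
      "A r k * A p k < 0" "A q k = 0" "A q l * A r l < 0" "A p l = 0"
    by (rule obtain_cyclic_sign_pattern)
  from rows pattern obtain \<delta> where "\<forall>c\<in>{1, k, l}. \<bar>\<delta> c\<bar> = 1"
    "blocking_shift 3 A {1, k, l} \<delta>" "blocking_shift 3 A {1, k, l} (\<lambda>c. - \<delta> c)"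
    by (rule blocking_shift_cycle)
  with \<open>1 \<in> {1..n}\<close> kl show ?thesis
    using that[of "{1, k, l}" \<delta>] by blast
qed

theorem lemma6:
  fixes d n :: nat and A :: "nat \<Rightarrow> nat \<Rightarrow> real"
  assumes "d \<ge> 1" and "n \<ge> 1"
    and "\<forall>j\<in>{1..n}. \<not> can_eliminate 3 n A j"
  shows "\<exists>b :: nat \<Rightarrow> real. \<not> sol_graph_connected n (sol_set d 3 n A b)"
proof -
  obtain S \<delta> where "S \<subseteq> {1..n}" "S \<noteq> {}" "\<forall>l\<in>S. \<bar>\<delta> l\<bar> = 1"
    "blocking_shift 3 A S \<delta>" "blocking_shift 3 A S (\<lambda>l. - \<delta> l)"
    using exists_blocking_shift[OF assms(2,3)] .
  moreover have "\<forall>j\<in>{1..n}. mixed_column 3 A j"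
    using assms(3) mixed_column_of_not_can_eliminate by blast
  ultimately show ?thesis
    using disconnected_of_blocking_shifts[of 3 d S n \<delta> A] assms(1) by simp
qed

end
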